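(* Let $m\ge 2$, $\omega=e^{2\pi i/m}$, and $$d_n(q)=\sum_{0\le k\le n}(-1)^k q^{\binom k2}\prod_{k+1\le t\le n}[t]_q .$$ Let $c=\min\{1-\cos(2\pi j/m):1\le j\le m-1\}$. Then for every $n\ge m$ and every $1\le j\le m-1$, $$\left|d_n(\omega^j)\right|\le (m-1)\left(\frac{2}{c}\right)^{(m-2)/2}.$$ In particular $|d_n(\omega^j)|$ is bounded independently of $n$.
   Context: $[t]_q=1+q+\cdots+q^{t-1}$ for $t\ge 1$, and an empty product equals $1$. (The polynomial $d_n(q)$ is the generating function $\sum_{\pi}q^{\mathrm{maj}(\pi)}$ of the major index over derangements of $[n]$.) *)

theory Defs
  imports "HOL-Analysis.Analysis"
begin

definition qint :: "complex \<Rightarrow> nat \<Rightarrow> complex" where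
  "qint q t = (\<Sum>i<t. q ^ i)"

definition derange_poly :: "nat \<Rightarrow> complex \<Rightarrow> complex" where
  "derange_poly n q = (\<Sum>k\<in>{0..n}. (-1) ^ k * q ^ (k choose 2) * (\<Prod>t\<in>{k+1..n}. qint q t))"

end

theory Submission
  imports Defs
begin

(* The derangement polynomial satisfies the recurrence
     d_{n+1}(q) = [n+1]_q d_n(q) + (-1)^{n+1} q^{binom (n+1) 2}.
   Let q be an m-th root of unity different from 1, i.e. q^m = 1, q <> 1 and |q| = 1.
   Then [t]_q = (1 - q^t)/(1 - q) is m-periodic in t, vanishes at multiples of m and is
   bounded by s := 2/|1 - q|.  At N = m*a (a > 0) the recurrence therefore gives
   |d_N(q)| = 1 and d_{N+1}(q) = 0; from a zero the recurrence lets |d| grow by at most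
   |d_{N+1+r}| <= r * s^(r-1) (for s >= 1).  Since every n >= m is m*a + r with a > 0
   and r < m, this yields |d_n(q)| <= (m-1) s^(m-2) for every such root of unity q.
   The main theorem specialises to q = omega^j = cis(2 pi j/m), where
   |1 - q| = sqrt(2 (1 - cos(2 pi j/m))) >= sqrt(2c), so s <= sqrt(2/c). *)

lemma derange_poly_Suc:
  "derange_poly (Suc n) q = qint q (Suc n) * derange_poly n q + (-1) ^ Suc n * q ^ (Suc n choose 2)"
proof -
  have "derange_poly (Suc n) q =
      (\<Sum>k\<in>{0..n}. (-1) ^ k * q ^ (k choose 2) * (\<Prod>t\<in>{k+1..Suc n}. qint q t))
      + (-1) ^ Suc n * q ^ (Suc n choose 2)"
    unfolding derange_poly_def by (simp add: sum.atLeast0_atMost_Suc)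
  also have "(\<Sum>k\<in>{0..n}. (-1) ^ k * q ^ (k choose 2) * (\<Prod>t\<in>{k+1..Suc n}. qint q t))
      = qint q (Suc n) * derange_poly n q"
    unfolding derange_poly_def sum_distrib_left
    by (rule sum.cong) (auto simp: prod.nat_ivl_Suc')
  finally show ?thesis .
qed

text \<open>On the unit circle the inhomogeneous term of the recurrence has modulus one.\<close>

lemma norm_derange_poly_Suc_le:
  assumes "cmod q = 1"
  shows "cmod (derange_poly (Suc n) q) \<le> cmod (qint q (Suc n)) * cmod (derange_poly n q) + 1"
  using norm_triangle_ineq[of "qint q (Suc n) * derange_poly n q"
      "(-1) ^ Suc n * q ^ (Suc n choose 2)"] assms
  by (simp add: derange_poly_Suc norm_mult norm_power)

lemma qint_geometric:
  assumes "q \<noteq> 1"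
  shows "qint q t = (1 - q ^ t) / (1 - q)"
  using assms unfolding qint_def
  by (simp add: geometric_sum) (simp add: divide_simps; simp add: algebra_simps)

lemma qint_periodic:
  assumes "q ^ m = 1" and "q \<noteq> 1"
  shows "qint q (m * a + r) = qint q r"
proof -
  have "q ^ (m * a + r) = q ^ r" using assms(1) by (simp add: power_add power_mult)
  then show ?thesis using assms(2) by (simp add: qint_geometric)
qed

lemma norm_qint_le:
  assumes "cmod q = 1" and "q \<noteq> 1"
  shows "cmod (qint q t) \<le> 2 / cmod (1 - q)"
proof -
  have "cmod (1 - q ^ t) \<le> 2"
    using norm_triangle_ineq4[of 1 "q ^ t"] assms(1) by (simp add: norm_power)
  then show ?thesis
    using assms(2) by (simp add: qint_geometric norm_divide divide_right_mono)
qed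

text \<open>At a positive multiple of the period, \<open>[N]\<^sub>q = 0\<close> and \<open>[N+1]\<^sub>q = 1\<close>:
  the recurrence reduces \<open>d\<^sub>N\<close> to a unimodular term and then cancels it in \<open>d\<^sub>N\<^sub>+\<^sub>1\<close>.\<close>

lemma derange_poly_at_period:
  assumes "q ^ m = 1" and "q \<noteq> 1" and "cmod q = 1" and "0 < m * a"
  shows "cmod (derange_poly (m * a) q) = 1"
    and "derange_poly (m * a + 1) q = 0"
proof -
  obtain b where b: "m * a = Suc b" using assms(4) gr0_conv_Suc by blast
  have "qint q (m * a) = 0"
    using qint_periodic[OF assms(1,2), of a 0] by (simp add: qint_def)
  then have d_period: "derange_poly (m * a) q = (-1) ^ (m * a) * q ^ (m * a choose 2)"
    using derange_poly_Suc[of b q] b by simp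
  then show "cmod (derange_poly (m * a) q) = 1"
    using assms(3) by (simp add: norm_mult norm_power)
  have "qint q (m * a + 1) = 1"
    using qint_periodic[OF assms(1,2), of a 1] by (simp add: qint_def)
  moreover have "q ^ (m * a) = 1" using assms(1) by (simp add: power_mult)
  moreover have "(Suc (m * a) choose 2) = (m * a choose 2) + m * a"
    by (simp add: numeral_2_eq_2)
  ultimately show "derange_poly (m * a + 1) q = 0"
    using derange_poly_Suc[of "m * a" q] d_period by (simp add: power_add)
qed

text \<open>Starting from a zero of the sequence, each step of the recurrence multiplies by at most
  \<open>s\<close> and adds at most one, so after \<open>r\<close> steps the modulus is at most \<open>r s\<^sup>r\<^sup>-\<^sup>1\<close>.\<close>

lemma derange_poly_growth_from_zero:
  assumes "cmod q = 1" and qint_le: "\<And>t. cmod (qint q t) \<le> s" and "1 \<le> s"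
    and "derange_poly N q = 0"
  shows "cmod (derange_poly (N + r) q) \<le> real r * s ^ (r - 1)"
proof (induction r)
  case 0
  then show ?case using assms(4) by simp
next
  case (Suc r)
  have "cmod (derange_poly (N + Suc r) q)
      \<le> cmod (qint q (Suc (N + r))) * cmod (derange_poly (N + r) q) + 1"
    using norm_derange_poly_Suc_le[OF assms(1)] by simp
  also have "\<dots> \<le> s * (real r * s ^ (r - 1)) + 1"
    using qint_le Suc.IH assms(3) by (intro add_mono mult_mono) auto
  also have "\<dots> \<le> real (Suc r) * s ^ (Suc r - 1)"
  proof (cases r)
    case (Suc k)
    have "1 \<le> s ^ Suc k" using assms(3) by (rule one_le_power)
    then show ?thesis using Suc by (simp add: algebra_simps)
  qed simp
  finally show ?case .
qed

theorem derange_poly_root_of_unity_bound: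
  assumes "q ^ m = 1" and "q \<noteq> 1" and "cmod q = 1" and "2 \<le> m" and "m \<le> n"
    and "2 / cmod (1 - q) \<le> s" and "1 \<le> s"
  shows "cmod (derange_poly n q) \<le> real (m - 1) * s ^ (m - 2)"
proof -
  have qint_le: "cmod (qint q t) \<le> s" for t
    using norm_qint_le[OF assms(3,2), of t] assms(6) by linarith
  define a r where "a = n div m" and "r = n mod m"
  have n_eq: "n = m * a + r" and "0 < m * a" and "r < m"
    using assms(4,5) by (auto simp: a_def r_def div_greater_zero_iff)
  note at_period = derange_poly_at_period[OF assms(1-3) \<open>0 < m * a\<close>]
  show ?thesis
  proof (cases r)
    case 0
    have "1 \<le> real (m - 1) * s ^ (m - 2)"
      using assms(4) one_le_power[OF assms(7), of "m - 2"] mult_mono[of 1 "real (m - 1)" 1]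
      by simp
    then show ?thesis using at_period(1) n_eq 0 by (simp only: add_0_right)
  next
    case (Suc r')
    have "cmod (derange_poly n q) \<le> real r' * s ^ (r' - 1)"
      using derange_poly_growth_from_zero[OF assms(3) qint_le assms(7) at_period(2), of r']
        n_eq Suc by simp
    also have "\<dots> \<le> real (m - 1) * s ^ (m - 2)"
      using Suc \<open>r < m\<close> assms(7) by (intro mult_mono power_increasing) auto
    finally show ?thesis .
  qed
qed

lemma cos_less_one:
  assumes "0 < x" and "x < 2 * pi"
  shows "cos x < 1"
proof (rule ccontr)
  assume "\<not> cos x < 1"
  then have "cos x = 1" using cos_le_one[of x] by linarith
  then obtain k :: int where k: "x = real_of_int k * 2 * pi" using cos_one_2pi_int by blast
  have "0 < real_of_int k" and "real_of_int k < 1"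
    using assms k by (simp_all add: zero_less_mult_iff)
  then have "0 < k" and "k < 1" by simp_all
  then show False by simp
qed

lemma norm_one_minus_cis: "cmod (1 - cis t) = sqrt (2 * (1 - cos t))"
proof -
  have "(1 - cos t)\<^sup>2 + (sin t)\<^sup>2 = 2 * (1 - cos t)"
    using sin_cos_squared_add[of t] by (simp add: power2_eq_square algebra_simps)
  then show ?thesis by (simp add: cmod_def)
qed

lemma two_div_norm_one_minus_cis_le:
  assumes "0 < c" and "c \<le> 1 - cos \<theta>"
  shows "2 / cmod (1 - cis \<theta>) \<le> sqrt (2 / c)"
proof -
  have "2 / sqrt (2 * c) = sqrt (2 / c)"
  proof -
    have "sqrt (2 * c) * sqrt (2 / c) = sqrt (2\<^sup>2)"
      using assms(1) by (simp add: real_sqrt_mult[symmetric] power2_eq_square)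
    then show ?thesis using assms(1) by (simp add: field_simps)
  qed
  moreover have "sqrt (2 * c) \<le> cmod (1 - cis \<theta>)"
    using assms(2) by (simp add: norm_one_minus_cis)
  moreover have "0 < sqrt (2 * c)" using assms(1) by simp
  ultimately show ?thesis
    using frac_le[of 2 2 "sqrt (2 * c)" "cmod (1 - cis \<theta>)"] by simp
qed

lemma min_one_minus_cos_props:
  assumes "2 \<le> m" and "1 \<le> j" and "j \<le> m - 1"
  defines "c \<equiv> Min ((\<lambda>i. 1 - cos (2 * pi * real i / real m)) ` {1..m-1})"
  shows "0 < c" and "c \<le> 1 - cos (2 * pi * real j / real m)"
proof -
  let ?S = "(\<lambda>i. 1 - cos (2 * pi * real i / real m)) ` {1..m-1}"
  have "finite ?S" and "?S \<noteq> {}" using assms(1) by auto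
  have "cos (2 * pi * real i / real m) < 1" if "i \<in> {1..m-1}" for i
    using that assms(1) by (intro cos_less_one) (auto simp: divide_simps)
  then show "0 < c"
    using Min_in[OF \<open>finite ?S\<close> \<open>?S \<noteq> {}\<close>] unfolding c_def by auto
  show "c \<le> 1 - cos (2 * pi * real j / real m)"
    unfolding c_def using assms(2,3) by (intro Min_le) auto
qed

lemma power_cis_root_of_unity:
  assumes "0 < m"
  shows "cis (2 * pi / real m) ^ j = cis (2 * pi * real j / real m)"
    and "cis (2 * pi * real j / real m) ^ m = 1"
proof -
  show "cis (2 * pi / real m) ^ j = cis (2 * pi * real j / real m)"
    unfolding Complex.DeMoivre by (rule arg_cong[where f = cis]) simp
  have "real m * (2 * pi * real j / real m) = 2 * pi * real j" using assms by simp
  then show "cis (2 * pi * real j / real m) ^ m = 1"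
    unfolding Complex.DeMoivre by simp
qed

theorem mainTheorem3:
  fixes m n j :: nat
  assumes "m \<ge> 2" and "n \<ge> m" and "1 \<le> j" and "j \<le> m - 1"
  defines "\<omega> \<equiv> cis (2 * pi / real m)"
  defines "c \<equiv> Min ((\<lambda>i. 1 - cos (2 * pi * real i / real m)) ` {1..m-1})"
  shows "cmod (derange_poly n (\<omega> ^ j)) \<le> real (m - 1) * (2 / c) powr ((real m - 2) / 2)"
proof -
  define \<theta> where "\<theta> = 2 * pi * real j / real m"
  have q_eq: "\<omega> ^ j = cis \<theta>" and q_root: "cis \<theta> ^ m = 1"
    using power_cis_root_of_unity[of m j] assms(1) unfolding \<omega>_def \<theta>_def by auto
  have c_pos: "0 < c" and c_le: "c \<le> 1 - cos \<theta>"
    using min_one_minus_cos_props[OF assms(1,3,4)] unfolding c_def \<theta>_def by auto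
  have "cis \<theta> \<noteq> 1" using c_pos c_le by (auto simp: complex_eq_iff)
  have "c \<le> 2" using c_le cos_ge_minus_one[of \<theta>] by linarith
  then have s_ge_1: "1 \<le> sqrt (2 / c)" using c_pos by simp
  have "cmod (derange_poly n (cis \<theta>)) \<le> real (m - 1) * sqrt (2 / c) ^ (m - 2)"
    using derange_poly_root_of_unity_bound[OF q_root \<open>cis \<theta> \<noteq> 1\<close> norm_cis assms(1,2)
        two_div_norm_one_minus_cis_le[OF c_pos c_le] s_ge_1] .
  moreover have "sqrt (2 / c) ^ (m - 2) = (2 / c) powr ((real m - 2) / 2)"
    using c_pos assms(1) by (simp add: powr_half_sqrt[symmetric] powr_power)
  ultimately show ?thesis unfolding q_eq by simp
qed

end
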